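(* Let $d\ge2$, $p\in]1,+\infty[$, $q\in[1,p]$, $0<R_1<R_2<+\infty$. There is a constant $C=C(d,p,q,R_1,R_2)>0$ such that for all bounded open convex sets $\Omega_0,\Theta\subset\mathbb{R}^d$ with $\overline\Theta\subset\Omega_0$, $P(\Omega_0)=P(B_{R_2})$ and $|\Omega_0\setminus\overline\Theta|=|A_{R_1,R_2}|$, if $\tilde\sigma_{p,q}(\Omega_0\setminus\overline\Theta)\ge\frac12\tilde\sigma_{p,q}(A_{R_1,R_2})$ then $\operatorname{diam}(\Omega_0)\le C$.
   Context: $A_{R_1,R_2}=B_{R_2}\setminus\overline{B_{R_1}}$. $\tilde\sigma_{p,q}(\Omega_0\setminus\overline\Theta)=\min_{\psi\in W^{1,p}(\Omega_0\setminus\overline\Theta),\psi\not\equiv0}\left(\int_{\Omega_0\setminus\overline\Theta}|\nabla\psi|^p+|\psi|^p\,dx\right)^{1/p}/\left(\int_{\partial\Omega_0}|\psi|^q\,d\mathcal H^{d-1}\right)^{1/q}$. *)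

theory Defs
  imports "HOL-Analysis.Analysis"
begin

text \<open>s-dimensional Hausdorff outer measure (normalised so that it agrees with
  Lebesgue measure for integer s = dimension), via the Caratheodory construction
  with countable covers by bounded sets of diameter < delta.\<close>
definition hausdorff_outer :: "real \<Rightarrow> 'a::euclidean_space set \<Rightarrow> ennreal" where
  "hausdorff_outer s A =
     (SUP \<delta>\<in>{0<..}. INF C\<in>{C::nat \<Rightarrow> 'a set. A \<subseteq> (\<Union>i. C i) \<and>
                              (\<forall>i. bounded (C i) \<and> diameter (C i) < \<delta>)}.
        (\<Sum>i. ennreal (unit_ball_vol s * (diameter (C i) / 2) powr s)))"

definition hausdorff_measure :: "real \<Rightarrow> 'a::euclidean_space measure" where
  "hausdorff_measure s = measure_of UNIV (sets borel) (hausdorff_outer s)"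

definition C1c_field :: "'a::euclidean_space set \<Rightarrow> ('a \<Rightarrow> 'b::euclidean_space)
                           \<Rightarrow> ('a \<Rightarrow> ('a \<Rightarrow>\<^sub>L 'b)) \<Rightarrow> bool" where
  "C1c_field U f Df \<longleftrightarrow>
     (\<forall>x. (f has_derivative blinfun_apply (Df x)) (at x)) \<and> continuous_on UNIV Df \<and>
     (\<exists>K. compact K \<and> K \<subseteq> U \<and> (\<forall>x. x \<notin> K \<longrightarrow> f x = 0))"

definition perimeter :: "'a::euclidean_space set \<Rightarrow> ereal" where
  "perimeter E = (SUP (\<phi>, D\<phi>)\<in>{(\<phi>, D\<phi>). C1c_field UNIV \<phi> D\<phi> \<and> (\<forall>x. norm (\<phi> x) \<le> 1)}.
       ereal (set_lebesgue_integral lebesgue E (\<lambda>x. \<Sum>b\<in>Basis. (blinfun_apply (D\<phi> x) b) \<bullet> b)))"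

definition weak_grad_W1p :: "real \<Rightarrow> 'a::euclidean_space set \<Rightarrow> ('a \<Rightarrow> real) \<Rightarrow> ('a \<Rightarrow> 'a) \<Rightarrow> bool" where
  "weak_grad_W1p p U \<psi> g \<longleftrightarrow>
     set_borel_measurable lebesgue U \<psi> \<and> set_borel_measurable lebesgue U g \<and>
     set_integrable lebesgue U (\<lambda>x. \<bar>\<psi> x\<bar> powr p) \<and>
     set_integrable lebesgue U (\<lambda>x. norm (g x) powr p) \<and>
     (\<forall>\<phi> D\<phi>. C1c_field U \<phi> D\<phi> \<longrightarrow>
        (\<forall>i\<in>Basis. set_lebesgue_integral lebesgue U (\<lambda>x. \<psi> x * blinfun_apply (D\<phi> x) i)
                   = - set_lebesgue_integral lebesgue U (\<lambda>x. (g x \<bullet> i) * \<phi> x)))"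

definition trace_at :: "'a::euclidean_space set \<Rightarrow> ('a \<Rightarrow> real) \<Rightarrow> 'a \<Rightarrow> real" where
  "trace_at U \<psi> x = Lim (at_right 0)
     (\<lambda>r. set_lebesgue_integral lebesgue (ball x r \<inter> U) \<psi> / measure lebesgue (ball x r \<inter> U))"

text \<open>tilde sigma_{p,q}(Omega0 \ closure Theta) with trace integral on the outer boundary.
  Functions with vanishing boundary trace have quotient +\<infinity> and are irrelevant to the infimum.\<close>
definition steklov_sigma :: "real \<Rightarrow> real \<Rightarrow> 'a::euclidean_space set \<Rightarrow> 'a set \<Rightarrow> real" where
  "steklov_sigma p q \<Omega>0 \<Theta> =
    (let U = \<Omega>0 - closure \<Theta>;
         T = (\<lambda>\<psi>. \<integral>\<^sup>+x\<in>frontier \<Omega>0. ennreal (\<bar>trace_at U \<psi> x\<bar> powr q)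
                      \<partial>(hausdorff_measure (real DIM('a) - 1)))
     in Inf {(set_lebesgue_integral lebesgue U (\<lambda>x. norm (g x) powr p + \<bar>\<psi> x\<bar> powr p)) powr (1/p)
              / (enn2real (T \<psi>)) powr (1/q) | \<psi> g.
             weak_grad_W1p p U \<psi> g \<and> 0 < T \<psi> \<and> T \<psi> < \<infinity>})"

end

theory Submission
  imports Defs
begin

text \<open>A greedy orthonormal
  frame yields a ball of radius \<open>r\<close> inside \<open>\<Omega>\<close> and a slab of width \<open>12\<^sup>d r\<close> containing it. Testing the
  perimeter with a field of divergence at least \<open>1/(4h)\<close> on a slab of half-width \<open>h\<close> gives
  \<open>|\<Omega>| \<le> 4 \<cdot> 12\<^sup>d r M\<close>, so \<open>r\<close> is bounded below, and disjoint balls of radius \<open>r/2\<close> in the cone over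
  the inscribed ball give \<open>|\<Omega>| \<ge> c D r\<^sup>d\<^sup>-\<^sup>1\<close>. The perimeter of \<open>B\<^sub>R\<^sub>2\<close> is bounded explicitly by
  difference quotients, and the volume of \<open>\<Omega>\<^sub>0\<close> dominates that of the annulus.\<close>

section \<open>Inscribed balls and slabs of convex bodies\<close>

definition frame_residual :: "'a::euclidean_space \<Rightarrow> (nat \<Rightarrow> 'a) \<Rightarrow> nat \<Rightarrow> 'a \<Rightarrow> 'a" where
  "frame_residual a0 f k x = (x - a0) - (\<Sum>i\<in>{1..<k}. ((x - a0) \<bullet> f i) *\<^sub>R f i)"

lemma frame_residual_Suc:
  "1 \<le> k \<Longrightarrow> frame_residual a0 f (Suc k) x = frame_residual a0 f k x - ((x - a0) \<bullet> f k) *\<^sub>R f k"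
  by (simp add: frame_residual_def algebra_simps)

lemma frame_residual_cong:
  "(\<And>i. i \<in> {1..<k} \<Longrightarrow> f i = g i) \<Longrightarrow> frame_residual a0 f k x = frame_residual a0 g k x"
  unfolding frame_residual_def by (intro arg_cong2[where f="(-)"] refl sum.cong) auto

lemma continuous_on_frame_residual: "continuous_on S (frame_residual a0 f k)"
  unfolding frame_residual_def by (intro continuous_intros)

lemma frame_residual_in_span: "(x - a0) - frame_residual a0 f k x \<in> span (f ` {1..<k})"
  unfolding frame_residual_def by (simp, intro span_sum span_scale span_base imageI, simp)

lemma inner_frame_residual_eq_0:
  assumes orth: "\<And>i j. i \<in> {1..<k} \<Longrightarrow> j \<in> {1..<k} \<Longrightarrow> i \<noteq> j \<Longrightarrow> f i \<bullet> f j = 0"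
    and unit: "\<And>i. i \<in> {1..<k} \<Longrightarrow> norm (f i) = 1"
    and i: "i \<in> {1..<k}"
  shows "frame_residual a0 f k x \<bullet> f i = 0"
proof -
  have "(\<Sum>l\<in>{1..<k}. ((x - a0) \<bullet> f l) *\<^sub>R f l) \<bullet> f i = (\<Sum>l\<in>{1..<k}. ((x - a0) \<bullet> f l) * (f l \<bullet> f i))"
    by (simp add: inner_sum_left)
  also have "\<dots> = (\<Sum>l\<in>{i}. ((x - a0) \<bullet> f l) * (f l \<bullet> f i))"
    by (rule sum.mono_neutral_right) (use i orth in auto)
  also have "\<dots> = (x - a0) \<bullet> f i"
    using unit[OF i] by (simp add: dot_square_norm)
  finally show ?thesis by (simp add: frame_residual_def inner_diff_left)
qed

lemma inner_frame_residual_next: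
  assumes "\<And>i. i \<in> {1..<k} \<Longrightarrow> f i \<bullet> f k = 0"
  shows "frame_residual a0 f k x \<bullet> f k = (x - a0) \<bullet> f k"
proof -
  have "(\<Sum>l\<in>{1..<k}. ((x - a0) \<bullet> f l) *\<^sub>R f l) \<bullet> f k = 0"
    by (simp add: inner_sum_left assms)
  then show ?thesis by (simp add: frame_residual_def inner_diff_left)
qed

lemma norm_diff_projection_le:
  fixes r u :: "'a::real_inner"
  assumes "norm u = 1"
  shows "norm (r - (r \<bullet> u) *\<^sub>R u) \<le> norm r"
proof -
  have uu: "u \<bullet> u = 1" using assms by (simp add: dot_square_norm)
  have "(r - (r \<bullet> u) *\<^sub>R u) \<bullet> (r - (r \<bullet> u) *\<^sub>R u) = r \<bullet> r - (r \<bullet> u)^2"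
    by (simp add: inner_diff_left inner_diff_right inner_commute uu power2_eq_square algebra_simps)
  then have "(norm (r - (r \<bullet> u) *\<^sub>R u))^2 = (norm r)^2 - (r \<bullet> u)^2"
    by (simp add: power2_norm_eq_inner)
  then have "(norm (r - (r \<bullet> u) *\<^sub>R u))^2 \<le> (norm r)^2" by simp
  then show ?thesis by (simp add: power_mono_iff)
qed

lemma norm_frame_residual_Suc_le:
  assumes k: "1 \<le> k" and orth: "\<And>i. i \<in> {1..<k} \<Longrightarrow> f i \<bullet> f k = 0" and unit: "norm (f k) = 1"
  shows "norm (frame_residual a0 f (Suc k) x) \<le> norm (frame_residual a0 f k x)"
proof -
  have "frame_residual a0 f (Suc k) x =
      frame_residual a0 f k x - (frame_residual a0 f k x \<bullet> f k) *\<^sub>R f k"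
    using frame_residual_Suc[OF k] inner_frame_residual_next[of k f a0 x] orth by simp
  then show ?thesis using norm_diff_projection_le[OF unit] by simp
qed

lemma frame_residual_attains_positive_max:
  fixes K :: "'a::euclidean_space set"
  assumes K: "compact K" "interior K \<noteq> {}" and a0: "a0 \<in> K" and k: "k < DIM('a)"
  shows "\<exists>a\<in>K. norm (frame_residual a0 f (Suc k) a) > 0 \<and>
           (\<forall>x\<in>K. norm (frame_residual a0 f (Suc k) x) \<le> norm (frame_residual a0 f (Suc k) a))"
proof -
  let ?r = "frame_residual a0 f (Suc k)"
  obtain a where a: "a \<in> K" "\<And>y. y \<in> K \<Longrightarrow> norm (?r y) \<le> norm (?r a)"
    using continuous_attains_sup[OF K(1)] a0 continuous_on_norm[OF continuous_on_frame_residual]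
    by blast
  have "norm (?r a) > 0"
  proof (rule ccontr)
    assume "\<not> ?thesis"
    then have "?r y = 0" if "y \<in> K" for y
      using a(2)[OF that] by simp
    then have "x - a0 \<in> span (f ` {1..<Suc k})" if "x \<in> K" for x
      using frame_residual_in_span[of x a0 f "Suc k"] that by simp
    then have "(\<lambda>x. x - a0) ` K \<subseteq> span (f ` {1..<Suc k})"
      by blast
    then have "dim ((\<lambda>x. x - a0) ` K) \<le> dim (span (f ` {1..<Suc k}))"
      by (rule dim_subset)
    also have "\<dots> \<le> card (f ` {1..<Suc k})" by (simp add: dim_le_card')
    also have "\<dots> \<le> card {1..<Suc k}" by (rule card_image_le) simp
    also have "\<dots> < DIM('a)" using k by simp
    finally have "interior ((\<lambda>x. - a0 + x) ` K) = {}"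
      by (intro empty_interior_lowdim) simp
    then show False using K(2) by (simp only: interior_translation) simp
  qed
  then show ?thesis using a by blast
qed

text \<open>\<open>f j\<close> points from \<open>a0 + span {f 1, \<dots>, f (j - 1)}\<close> towards a point of \<open>K\<close> farthest
  from that affine subspace, and \<open>h j\<close> is that largest distance.\<close>
definition greedy_frame ::
    "'a::euclidean_space set \<Rightarrow> 'a \<Rightarrow> (nat \<Rightarrow> 'a) \<Rightarrow> (nat \<Rightarrow> real) \<Rightarrow> nat \<Rightarrow> bool" where
  "greedy_frame K a0 f h k \<longleftrightarrow>
    (\<forall>j\<in>{1..k}. norm (f j) = 1 \<and> h j > 0 \<and> (\<forall>x\<in>K. norm (frame_residual a0 f j x) \<le> h j) \<and>
                (\<exists>a\<in>K. frame_residual a0 f j a = h j *\<^sub>R f j)) \<and>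
    (\<forall>i\<in>{1..k}. \<forall>j\<in>{1..k}. i \<noteq> j \<longrightarrow> f i \<bullet> f j = 0) \<and>
    (\<forall>i j. 1 \<le> i \<longrightarrow> i \<le> j \<longrightarrow> j \<le> k \<longrightarrow> h j \<le> h i)"

lemma greedy_frame_extend:
  fixes K :: "'a::euclidean_space set"
  assumes K: "compact K" "interior K \<noteq> {}" and a0: "a0 \<in> K" and k: "k < DIM('a)"
    and fr: "greedy_frame K a0 f h k"
  shows "\<exists>f' h'. greedy_frame K a0 f' h' (Suc k)"
proof -
  have orth: "\<And>i j. i \<in> {1..k} \<Longrightarrow> j \<in> {1..k} \<Longrightarrow> i \<noteq> j \<Longrightarrow> f i \<bullet> f j = 0"
    and unit: "\<And>i. i \<in> {1..k} \<Longrightarrow> norm (f i) = 1"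
    and le_h: "\<And>j x. j \<in> {1..k} \<Longrightarrow> x \<in> K \<Longrightarrow> norm (frame_residual a0 f j x) \<le> h j"
    and mono: "\<And>i j. 1 \<le> i \<Longrightarrow> i \<le> j \<Longrightarrow> j \<le> k \<Longrightarrow> h j \<le> h i"
    using fr unfolding greedy_frame_def by blast+
  obtain a where a: "a \<in> K" "norm (frame_residual a0 f (Suc k) a) > 0"
     "\<And>x. x \<in> K \<Longrightarrow> norm (frame_residual a0 f (Suc k) x) \<le> norm (frame_residual a0 f (Suc k) a)"
    using frame_residual_attains_positive_max[OF K a0 k, of f] by auto
  define hk where "hk = norm (frame_residual a0 f (Suc k) a)"
  define v where "v = (1 / hk) *\<^sub>R frame_residual a0 f (Suc k) a"
  define f' where "f' = f(Suc k := v)"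
  define h' where "h' = h(Suc k := hk)"
  have hk: "hk > 0" using a by (simp add: hk_def)
  have "norm v = 1" using hk by (simp add: v_def hk_def)
  moreover have "frame_residual a0 f (Suc k) a = hk *\<^sub>R v" using hk by (simp add: v_def)
  moreover have "\<forall>x\<in>K. norm (frame_residual a0 f (Suc k) x) \<le> hk" using a(3) hk_def by blast
  ultimately have new: "norm (f' (Suc k)) = 1 \<and> h' (Suc k) > 0 \<and>
      (\<forall>x\<in>K. norm (frame_residual a0 f' (Suc k) x) \<le> h' (Suc k)) \<and>
      (\<exists>a\<in>K. frame_residual a0 f' (Suc k) a = h' (Suc k) *\<^sub>R f' (Suc k))"
    using hk a(1) frame_residual_cong[of "Suc k" f' f a0] by (auto simp: f'_def h'_def)
  have old: "norm (f' j) = 1 \<and> h' j > 0 \<and> (\<forall>x\<in>K. norm (frame_residual a0 f' j x) \<le> h' j) \<and>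
      (\<exists>a\<in>K. frame_residual a0 f' j a = h' j *\<^sub>R f' j)" if j: "j \<in> {1..k}" for j
    using fr j frame_residual_cong[of j f' f a0] unfolding greedy_frame_def by (auto simp: f'_def h'_def)
  have v_orth: "f i \<bullet> v = 0" if "i \<in> {1..k}" for i
    using inner_frame_residual_eq_0[of "Suc k" f i a0 a] that orth unit
    by (simp add: v_def inner_commute)
  have hk_le: "hk \<le> h k" if "1 \<le> k"
    using norm_frame_residual_Suc_le[OF that, of f a0 a] le_h[of k a] orth unit a(1) that
    unfolding hk_def by fastforce
  have "greedy_frame K a0 f' h' (Suc k)"
    unfolding greedy_frame_def
  proof (intro conjI)
    show "\<forall>j\<in>{1..Suc k}. norm (f' j) = 1 \<and> h' j > 0 \<and>
        (\<forall>x\<in>K. norm (frame_residual a0 f' j x) \<le> h' j) \<and>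
        (\<exists>a\<in>K. frame_residual a0 f' j a = h' j *\<^sub>R f' j)"
      using new old by (metis atLeastAtMostSuc_conv insert_iff le_add1 plus_1_eq_Suc)
    show "\<forall>i\<in>{1..Suc k}. \<forall>j\<in>{1..Suc k}. i \<noteq> j \<longrightarrow> f' i \<bullet> f' j = 0"
    proof (intro ballI impI)
      fix i j assume "i \<in> {1..Suc k}" "j \<in> {1..Suc k}" "i \<noteq> j"
      then show "f' i \<bullet> f' j = 0"
        using orth v_orth by (cases "i = Suc k"; cases "j = Suc k") (auto simp: f'_def inner_commute)
    qed
    show "\<forall>i j. 1 \<le> i \<longrightarrow> i \<le> j \<longrightarrow> j \<le> Suc k \<longrightarrow> h' j \<le> h' i"
    proof (intro allI impI)
      fix i j :: nat assume "1 \<le> i" "i \<le> j" "j \<le> Suc k"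
      then show "h' j \<le> h' i"
        using mono hk_le by (cases "i = Suc k"; cases "j = Suc k") (auto simp: h'_def intro: order.trans)
    qed
  qed
  then show ?thesis by blast
qed

lemma greedy_frame_exists:
  fixes K :: "'a::euclidean_space set"
  assumes "compact K" "interior K \<noteq> {}" "a0 \<in> K" "k \<le> DIM('a)"
  shows "\<exists>f h. greedy_frame K a0 f h k"
  using assms(4)
proof (induction k)
  case 0
  then show ?case by (auto simp: greedy_frame_def)
next
  case (Suc k)
  then show ?case using greedy_frame_extend[OF assms(1-3)] by (metis Suc_le_lessD less_imp_le)
qed

lemma abs_inner_greedy_frame_le:
  assumes fr: "greedy_frame K a0 f h n" and j: "j \<in> {1..n}" and x: "x \<in> K"
  shows "\<bar>(x - a0) \<bullet> f j\<bar> \<le> h j"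
proof -
  have "\<And>i. i \<in> {1..<j} \<Longrightarrow> f i \<bullet> f j = 0" and unit: "norm (f j) = 1"
    and le_h: "norm (frame_residual a0 f j x) \<le> h j"
    using fr j x unfolding greedy_frame_def by auto
  then have "\<bar>(x - a0) \<bullet> f j\<bar> = \<bar>frame_residual a0 f j x \<bullet> f j\<bar>"
    using inner_frame_residual_next[of j f a0 x] by simp
  also have "\<dots> \<le> norm (frame_residual a0 f j x)"
    using Cauchy_Schwarz_ineq2[of "frame_residual a0 f j x" "f j"] unit by simp
  finally show ?thesis using le_h by simp
qed

lemma box_coefficient_bound:
  fixes \<tau> x y z c H :: real
  assumes "\<bar>\<tau>\<bar> \<le> c / 12" "0 < c" "c \<le> 1" "\<bar>x\<bar> \<le> H" "\<bar>y\<bar> \<le> H" "\<bar>z\<bar> \<le> c / 12 * H"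
  shows "\<bar>\<tau> * (x - y) + z\<bar> / (1/2 - \<tau>) \<le> c * H"
proof -
  have H: "0 \<le> H" using assms(4) by linarith
  have den: "5/12 \<le> 1/2 - \<tau>" using assms(1,3) by (simp add: abs_le_iff)
  have "\<bar>\<tau> * (x - y)\<bar> \<le> c / 12 * (2 * H)"
    unfolding abs_mult by (rule mult_mono) (use assms in auto)
  then have num: "\<bar>\<tau> * (x - y) + z\<bar> \<le> c / 4 * H" using assms(6) by linarith
  have "\<bar>\<tau> * (x - y) + z\<bar> / (1/2 - \<tau>) \<le> (c / 4 * H) / (5/12)"
    by (rule frac_le) (use num den H assms(2) in auto)
  also have "\<dots> \<le> c * H" using H assms(2) by (simp add: field_simps)
  finally show ?thesis .
qed

lemma span_insert_orthogonal_decomposition: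
  fixes v :: "'a::euclidean_space"
  assumes w: "w \<in> span (insert v S)" and v: "norm v = 1" and orth: "\<And>y. y \<in> S \<Longrightarrow> y \<bullet> v = 0"
  shows "w - (w \<bullet> v) *\<^sub>R v \<in> span S"
proof -
  obtain s where u: "w - s *\<^sub>R v \<in> span S" using w unfolding span_insert by blast
  have "v \<bullet> (w - s *\<^sub>R v) = 0"
    by (rule orthogonal_to_span[OF u, unfolded orthogonal_def]) (use orth in \<open>auto simp: inner_commute\<close>)
  then have "s = w \<bullet> v" using v by (simp add: inner_diff_right inner_commute dot_square_norm)
  then show ?thesis using u by simp
qed

definition frame_box :: "(nat \<Rightarrow> 'a::real_inner) \<Rightarrow> (nat \<Rightarrow> real) \<Rightarrow> nat \<Rightarrow> real \<Rightarrow> 'a set" where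
  "frame_box f h k c = {w \<in> span (f ` {1..k}). \<forall>j\<in>{1..k}. \<bar>w \<bullet> f j\<bar> \<le> c * h j}"

text \<open>The new centre is the midpoint of the old one and the farthest point \<open>a\<close> in the new
  direction; a small box around it is covered by convex combinations of \<open>a\<close> with the old box.\<close>
lemma greedy_frame_box_step:
  fixes K :: "'a::euclidean_space set"
  assumes conv: "convex K" and fr: "greedy_frame K a0 f h n" and k: "Suc k \<le> n"
    and c: "0 < c" "c \<le> 1"
    and g: "g \<in> K" "g - a0 \<in> span (f ` {1..k})" "(+) g ` frame_box f h k c \<subseteq> K"
  shows "\<exists>g'\<in>K. g' - a0 \<in> span (f ` {1..Suc k}) \<and> (+) g' ` frame_box f h (Suc k) (c / 12) \<subseteq> K"
proof -
  have k1: "Suc k \<in> {1..n}" using k by auto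
  define hk where "hk = h (Suc k)"
  define v where "v = f (Suc k)"
  have hk: "hk > 0" and vn: "norm v = 1" using fr k1 unfolding greedy_frame_def hk_def v_def by auto
  obtain a where a: "a \<in> K" "frame_residual a0 f (Suc k) a = hk *\<^sub>R v"
    using fr k1 unfolding greedy_frame_def hk_def v_def by blast
  have v_orth: "f j \<bullet> v = 0" if "j \<in> {1..k}" for j
    using fr that k1 unfolding greedy_frame_def v_def by auto
  define q where "q = a - hk *\<^sub>R v"
  have q: "q - a0 \<in> span (f ` {1..k})"
    using frame_residual_in_span[of a a0 f "Suc k"] a(2) atLeastLessThanSuc_atLeastAtMost[of 1 k]
    by (simp add: q_def algebra_simps)
  have span_Suc: "span (f ` {1..Suc k}) = span (insert v (f ` {1..k}))"
    by (simp add: v_def atLeastAtMostSuc_conv insert_commute)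
  have span_le: "span (f ` {1..k}) \<subseteq> span (f ` {1..Suc k})" by (intro span_mono image_mono) auto
  have v_span: "v \<in> span (f ` {1..Suc k})" unfolding span_Suc by (simp add: span_base)
  define g' where "g' = (1/2) *\<^sub>R (g + a)"
  have g'_eq: "g' - a0 = (1/2) *\<^sub>R (g - a0) + (1/2) *\<^sub>R (q - a0) + (1/2 * hk) *\<^sub>R v"
    by (simp add: g'_def q_def algebra_simps flip: scaleR_add_left)
  have g'_span: "g' - a0 \<in> span (f ` {1..Suc k})"
    unfolding g'_eq using g(2) q span_le v_span by (intro span_add span_scale) auto
  have "g' \<in> K"
    using convexD[OF conv g(1) a(1), of "1/2" "1/2"] by (simp add: g'_def scaleR_add_right)
  moreover have "g' + w' \<in> K" if w': "w' \<in> frame_box f h (Suc k) (c / 12)" for w'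
  proof -
    define s where "s = w' \<bullet> v"
    define u where "u = w' - s *\<^sub>R v"
    have "w' \<in> span (insert v (f ` {1..k}))" using w' span_Suc by (simp add: frame_box_def)
    then have u: "u \<in> span (f ` {1..k})"
      unfolding u_def s_def by (rule span_insert_orthogonal_decomposition[OF _ vn]) (use v_orth in auto)
    have w'_eq: "w' = u + s *\<^sub>R v" by (simp add: u_def)
    define \<tau> where "\<tau> = s / hk"
    have \<tau>: "\<bar>\<tau>\<bar> \<le> c / 12"
      using w' hk k1 by (auto simp: frame_box_def \<tau>_def s_def v_def hk_def abs_div pos_divide_le_eq)
    have half: "0 \<le> 1/2 + \<tau>" "1/2 + \<tau> \<le> 1" and pos: "0 < 1/2 - \<tau>"
      using \<tau> c by (auto simp: abs_le_iff)
    define w where "w = (1 / (1/2 - \<tau>)) *\<^sub>R (\<tau> *\<^sub>R ((g - a0) - (q - a0)) + u)"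
    have "w \<in> frame_box f h k c"
      unfolding frame_box_def
    proof (intro CollectI conjI ballI)
      show "w \<in> span (f ` {1..k})"
        unfolding w_def by (intro span_scale span_add span_diff g(2) q u)
      fix j assume j: "j \<in> {1..k}"
      have jn: "j \<in> {1..n}" using j k by auto
      have "(q - a0) \<bullet> f j = (a - a0) \<bullet> f j"
        using v_orth[OF j] by (simp add: q_def inner_diff_left inner_diff_right inner_commute)
      then have "\<bar>(q - a0) \<bullet> f j\<bar> \<le> h j" using abs_inner_greedy_frame_le[OF fr jn a(1)] by simp
      moreover have "v \<bullet> f j = 0" using v_orth[OF j] by (simp add: inner_commute)
      then have "u \<bullet> f j = w' \<bullet> f j" by (simp add: w'_eq inner_add_left)
      then have "\<bar>u \<bullet> f j\<bar> \<le> c / 12 * h j" using w' j by (auto simp: frame_box_def)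
      ultimately have "\<bar>\<tau> * ((g - a0) \<bullet> f j - (q - a0) \<bullet> f j) + u \<bullet> f j\<bar> / (1/2 - \<tau>) \<le> c * h j"
        using box_coefficient_bound[OF \<tau> c abs_inner_greedy_frame_le[OF fr jn g(1)]] by blast
      then show "\<bar>w \<bullet> f j\<bar> \<le> c * h j"
        using pos by (simp add: w_def inner_add_left inner_diff_left abs_mult abs_div)
    qed
    then have "g + w \<in> K" using g(3) by blast
    moreover have "g' + w' = (1 - (1/2 + \<tau>)) *\<^sub>R (g + w) + (1/2 + \<tau>) *\<^sub>R a"
    proof -
      have "(1/2 - \<tau>) *\<^sub>R w = \<tau> *\<^sub>R ((g - a0) - (q - a0)) + u"
        using pos by (simp add: w_def)
      moreover have "s = hk * \<tau>" using hk by (simp add: \<tau>_def)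
      ultimately show ?thesis
        by (simp add: g'_def q_def w'_eq algebra_simps)
    qed
    ultimately show ?thesis
      using convexD_alt[OF conv _ a(1) half] by simp
  qed
  ultimately show ?thesis using g'_span by blast
qed

lemma greedy_frame_box_subset:
  fixes K :: "'a::euclidean_space set"
  assumes conv: "convex K" and fr: "greedy_frame K a0 f h n" and a0: "a0 \<in> K" and k: "k \<le> n"
  shows "\<exists>g\<in>K. g - a0 \<in> span (f ` {1..k}) \<and> (+) g ` frame_box f h k ((1/12)^k) \<subseteq> K"
  using k
proof (induction k)
  case 0
  then show ?case using a0 by (auto simp: frame_box_def span_empty)
next
  case (Suc k)
  then obtain g where "g \<in> K" "g - a0 \<in> span (f ` {1..k})" "(+) g ` frame_box f h k ((1/12)^k) \<subseteq> K"
    by auto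
  from greedy_frame_box_step[OF conv fr Suc.prems _ _ this] show ?case
    by (simp add: power_le_one)
qed

lemma greedy_frame_span_UNIV:
  fixes K :: "'a::euclidean_space set"
  assumes fr: "greedy_frame K a0 f h DIM('a)"
  shows "span (f ` {1..DIM('a)}) = UNIV"
proof -
  have unit: "\<And>j. j \<in> {1..DIM('a)} \<Longrightarrow> norm (f j) = 1"
    and orth: "\<And>i j. i \<in> {1..DIM('a)} \<Longrightarrow> j \<in> {1..DIM('a)} \<Longrightarrow> i \<noteq> j \<Longrightarrow> f i \<bullet> f j = 0"
    using fr unfolding greedy_frame_def by blast+
  have "inj_on f {1..DIM('a)}"
  proof (rule inj_onI, rule ccontr)
    fix i j assume ij: "i \<in> {1..DIM('a)}" "j \<in> {1..DIM('a)}" "f i = f j" "i \<noteq> j"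
    then have "f i \<bullet> f i = 0" using orth[of i j] by simp
    then show False using unit[OF ij(1)] by simp
  qed
  then have "card (f ` {1..DIM('a)}) = DIM('a)" by (simp add: card_image)
  moreover have "independent (f ` {1..DIM('a)})"
  proof (rule pairwise_orthogonal_independent)
    show "pairwise orthogonal (f ` {1..DIM('a)})"
      unfolding pairwise_def orthogonal_def using orth by (metis (no_types, lifting) imageE)
    show "0 \<notin> f ` {1..DIM('a)}" using unit by force
  qed
  ultimately show ?thesis
    using card_ge_dim_independent[of "f ` {1..DIM('a)}" UNIV] by auto
qed

lemma convex_body_inball_slab:
  fixes K :: "'a::euclidean_space set"
  assumes K: "compact K" "convex K" "interior K \<noteq> {}"
  shows "\<exists>g r e c. r > 0 \<and> norm e = 1 \<and> cball g r \<subseteq> K \<and> (\<forall>x\<in>K. \<bar>(x - c) \<bullet> e\<bar> \<le> 12^DIM('a) * r)"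
proof -
  define n where "n = DIM('a)"
  obtain a0 where a0: "a0 \<in> K" using K(3) interior_subset by blast
  obtain f h where fr: "greedy_frame K a0 f h n"
    using greedy_frame_exists[OF K(1) K(3) a0, of n] by (auto simp: n_def)
  obtain g where g: "(+) g ` frame_box f h n ((1/12)^n) \<subseteq> K"
    using greedy_frame_box_subset[OF K(2) fr a0, of n] by auto
  have n: "n \<in> {1..n}" by (simp add: n_def DIM_positive Suc_le_eq)
  have unit: "\<And>j. j \<in> {1..n} \<Longrightarrow> norm (f j) = 1" and "h n > 0"
    and mono: "\<And>j. j \<in> {1..n} \<Longrightarrow> h n \<le> h j"
    using fr n unfolding greedy_frame_def by auto
  define r where "r = (1/12)^n * h n"
  have r: "r > 0" using \<open>h n > 0\<close> by (simp add: r_def)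
  have "cball 0 r \<subseteq> frame_box f h n ((1/12)^n)"
  proof
    fix w :: 'a assume w: "w \<in> cball 0 r"
    have "\<bar>w \<bullet> f j\<bar> \<le> (1/12)^n * h j" if "j \<in> {1..n}" for j
    proof -
      have "\<bar>w \<bullet> f j\<bar> \<le> norm w" using Cauchy_Schwarz_ineq2[of w "f j"] unit[OF that] by simp
      also have "\<dots> \<le> r" using w by simp
      also have "\<dots> \<le> (1/12)^n * h j" unfolding r_def using mono[OF that] by (intro mult_left_mono) auto
      finally show ?thesis .
    qed
    then show "w \<in> frame_box f h n ((1/12)^n)"
      using greedy_frame_span_UNIV[OF fr[unfolded n_def]] by (simp add: frame_box_def n_def)
  qed
  then have "cball g r \<subseteq> K"
    using g cball_translation[of g 0 r] by (metis add.right_neutral image_mono order_trans)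
  moreover have "\<forall>x\<in>K. \<bar>(x - a0) \<bullet> f n\<bar> \<le> 12^DIM('a) * r"
    using abs_inner_greedy_frame_le[OF fr n] by (simp add: r_def n_def power_one_over)
  ultimately show ?thesis using r unit[OF n] by blast
qed

section \<open>Volume of convex bodies\<close>

lemma measure_lebesgue_ball:
  assumes "r \<ge> 0"
  shows "measure lebesgue (ball (c::'a::euclidean_space) r) = unit_ball_vol (DIM('a)) * r ^ DIM('a)"
  using content_ball[of r c] assms by (simp add: measure_completion)

lemma card_mult_measure_ball_le:
  fixes c :: "'i \<Rightarrow> 'a::euclidean_space"
  assumes K: "K \<in> lmeasurable" and I: "finite I" and \<rho>: "\<rho> \<ge> 0"
    and disj: "disjoint_family_on (\<lambda>i. ball (c i) \<rho>) I" and sub: "\<And>i. i \<in> I \<Longrightarrow> ball (c i) \<rho> \<subseteq> K"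
  shows "real (card I) * (unit_ball_vol (DIM('a)) * \<rho> ^ DIM('a)) \<le> measure lebesgue K"
proof -
  have "measure lebesgue (\<Union>i\<in>I. ball (c i) \<rho>) = (\<Sum>i\<in>I. measure lebesgue (ball (c i) \<rho>))"
    by (rule measure_finite_Union[OF I _ disj])
      (use emeasure_bounded_finite[of "ball (c _) \<rho>"] in \<open>auto simp: less_top\<close>)
  also have "\<dots> = real (card I) * (unit_ball_vol (DIM('a)) * \<rho> ^ DIM('a))"
    by (simp add: measure_lebesgue_ball[OF \<rho>])
  finally have "measure lebesgue (\<Union>i\<in>I. ball (c i) \<rho>) = real (card I) * (unit_ball_vol (DIM('a)) * \<rho> ^ DIM('a))" .
  moreover have "measure lebesgue (\<Union>i\<in>I. ball (c i) \<rho>) \<le> measure lebesgue K"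
    by (rule measure_mono_fmeasurable) (use sub K I in \<open>auto intro!: sets.finite_UN\<close>)
  ultimately show ?thesis by simp
qed

lemma convex_cball_homothety_subset:
  fixes K :: "'a::real_normed_vector set"
  assumes conv: "convex K" and B: "cball g r \<subseteq> K" and p: "p \<in> K" and t: "0 \<le> t" "t < 1"
  shows "cball (g + t *\<^sub>R (p - g)) ((1 - t) * r) \<subseteq> K"
proof
  fix y assume y: "y \<in> cball (g + t *\<^sub>R (p - g)) ((1 - t) * r)"
  define z where "z = g + (1 / (1 - t)) *\<^sub>R (y - (g + t *\<^sub>R (p - g)))"
  have "norm (y - (g + t *\<^sub>R (p - g))) \<le> (1 - t) * r"
    using y by (simp add: dist_norm norm_minus_commute)
  then have "norm (z - g) \<le> r" using t by (simp add: z_def divide_simps mult.commute)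
  then have z: "z \<in> K" using B by (simp add: subset_iff dist_norm norm_minus_commute)
  have "(1 - t) *\<^sub>R z = (1 - t) *\<^sub>R g + (y - (g + t *\<^sub>R (p - g)))"
    using t by (simp add: z_def scaleR_add_right)
  then have "y = (1 - t) *\<^sub>R z + t *\<^sub>R p"
    by (simp add: algebra_simps)
  then show "y \<in> K" using convexD[OF conv z p, of "1 - t" t] t by simp
qed

text \<open>Balls of radius \<open>r/2\<close> centred at spacing \<open>r\<close> along the first half of the segment from the
  centre of an inscribed ball to \<open>p\<close> are disjoint and, by convexity, contained in \<open>K\<close>.\<close>
lemma convex_measure_ge_dist_inball:
  fixes K :: "'a::euclidean_space set"
  assumes conv: "convex K" and K: "K \<in> lmeasurable" and B: "cball g r \<subseteq> K" and p: "p \<in> K"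
    and r: "r > 0"
  shows "dist p g / (2 * r) * (unit_ball_vol (DIM('a)) * (r/2) ^ DIM('a)) \<le> measure lebesgue K"
proof (cases "p = g")
  case True
  then show ?thesis by simp
next
  case False
  define L where "L = dist p g"
  have L: "L > 0" using False by (simp add: L_def)
  define N where "N = nat \<lfloor>L / (2*r)\<rfloor> + 1"
  define c where "c i = g + (real i * r / L) *\<^sub>R (p - g)" for i :: nat
  have t_le: "real i * r / L \<le> 1/2" if "i < N" for i
  proof -
    have "real i \<le> real (nat \<lfloor>L / (2*r)\<rfloor>)" using that by (simp add: N_def)
    also have "\<dots> \<le> L / (2*r)" using r L by (intro of_nat_floor) simp
    finally have "real i \<le> L / (2*r)" .
    then show ?thesis using r L by (simp add: field_simps)
  qed
  have "ball (c i) (r/2) \<subseteq> K" if "i \<in> {..<N}" for i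
  proof -
    have "(1/2) * r \<le> (1 - real i * r / L) * r"
      by (rule mult_right_mono) (use t_le[of i] that r in auto)
    then have "ball (c i) (r/2) \<subseteq> cball (c i) ((1 - real i * r / L) * r)"
      by (intro subset_trans[OF ball_subset_cball] subset_cball) simp
    also have "\<dots> \<subseteq> K" unfolding c_def
      by (rule convex_cball_homothety_subset[OF conv B p]) (use t_le[of i] that r L in auto)
    finally show ?thesis .
  qed
  moreover have "disjoint_family_on (\<lambda>i. ball (c i) (r/2)) {..<N}"
    unfolding disjoint_family_on_def
  proof (intro ballI impI disjoint_ballI)
    fix i j :: nat assume "i \<noteq> j"
    have "c i - c j = ((real i - real j) * r / L) *\<^sub>R (p - g)"
      by (simp add: c_def algebra_simps diff_divide_distrib)
    then have "dist (c i) (c j) = \<bar>real i - real j\<bar> * r" using r L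
      by (simp add: dist_norm abs_mult L_def dist_commute)
    moreover have "\<bar>real i - real j\<bar> \<ge> 1" using \<open>i \<noteq> j\<close> by linarith
    ultimately show "r/2 + r/2 \<le> dist (c i) (c j)" using r by (simp add: mult_right_mono)
  qed
  ultimately have "real N * (unit_ball_vol (DIM('a)) * (r/2) ^ DIM('a)) \<le> measure lebesgue K"
    using card_mult_measure_ball_le[OF K, of "{..<N}" "r/2" c] r by simp
  moreover have "L / (2 * r) \<le> real N" unfolding N_def using r L by linarith
  ultimately show ?thesis
    using mult_right_mono[of "L / (2 * r)" "real N" "unit_ball_vol (DIM('a)) * (r/2) ^ DIM('a)"] r
    by (simp add: L_def)
qed

lemma measure_annulus_pos:
  assumes "0 < R1" "R1 < R2"
  shows "measure lebesgue (ball (0::'a::euclidean_space) R2 - cball 0 R1) > 0"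
proof -
  obtain b :: 'a where b: "b \<in> Basis" using nonempty_Basis by blast
  define z where "z = ((R1 + R2) / 2) *\<^sub>R b"
  define \<rho> where "\<rho> = (R2 - R1) / 2"
  have \<rho>: "\<rho> > 0" using assms by (simp add: \<rho>_def)
  have nz: "norm z = (R1 + R2) / 2" using b assms by (simp add: z_def)
  have "ball z \<rho> \<subseteq> ball 0 R2 - cball 0 R1"
  proof
    fix y assume "y \<in> ball z \<rho>"
    then have "norm (y - z) < \<rho>" by (simp add: dist_norm norm_minus_commute)
    moreover have "norm y \<le> norm z + norm (y - z)" "norm z \<le> norm y + norm (y - z)"
      using norm_triangle_sub[of y z] norm_triangle_sub[of z y] by (auto simp: norm_minus_commute)
    ultimately have "norm y < R2" "R1 < norm y" using nz unfolding \<rho>_def by argo+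
    then show "y \<in> ball 0 R2 - cball 0 R1" by simp
  qed
  moreover have "ball (0::'a) R2 - cball 0 R1 \<in> lmeasurable"
    by (rule bounded_set_imp_lmeasurable[OF bounded_subset[OF bounded_ball]]) auto
  ultimately have "measure lebesgue (ball z \<rho>) \<le> measure lebesgue (ball (0::'a) R2 - cball 0 R1)"
    by (intro measure_mono_fmeasurable) auto
  moreover have "measure lebesgue (ball z \<rho>) > 0"
    using measure_lebesgue_ball[of \<rho> z] \<rho> by simp
  ultimately show ?thesis by linarith
qed

section \<open>A lower bound for the perimeter in a slab\<close>

definition divergence :: "('a::euclidean_space \<Rightarrow> 'a \<Rightarrow>\<^sub>L 'a) \<Rightarrow> 'a \<Rightarrow> real" where
  "divergence D\<phi> x = (\<Sum>b\<in>Basis. blinfun_apply (D\<phi> x) b \<bullet> b)"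

lemma continuous_on_divergence:
  "continuous_on S D\<phi> \<Longrightarrow> continuous_on S (divergence D\<phi>)"
  unfolding divergence_def
  by (intro continuous_intros bounded_bilinear.continuous_on[OF bounded_bilinear_blinfun_apply]) auto

lemma perimeter_ge_integral_divergence:
  assumes "C1c_field UNIV \<phi> D\<phi>" "\<And>x. norm (\<phi> x) \<le> 1"
  shows "ereal (set_lebesgue_integral lebesgue E (divergence D\<phi>)) \<le> perimeter E"
  unfolding perimeter_def divergence_def
  by (rule SUP_upper2[of "(\<phi>, D\<phi>)"]) (use assms in auto)

lemma set_integrable_continuous_bounded:
  fixes f :: "'a::euclidean_space \<Rightarrow> real"
  assumes "continuous_on UNIV f" "bounded S" "S \<in> sets lebesgue"
  shows "set_integrable lebesgue S f"
proof -
  obtain a where a: "S \<subseteq> cbox (-a) a" using bounded_subset_cbox_symmetric[OF assms(2)] by blast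
  have "f absolutely_integrable_on cbox (-a) a"
    by (rule absolutely_integrable_continuous) (rule continuous_on_subset[OF assms(1)], simp)
  then show ?thesis by (rule set_integrable_subset) (use assms(3) a in auto)
qed

lemma has_real_derivative_max_0_power2:
  "((\<lambda>s. (max 0 s)\<^sup>2) has_real_derivative 2 * max 0 t) (at t)"
proof (cases t "0::real" rule: linorder_cases)
  case less
  have "((\<lambda>s. 0) has_real_derivative 2 * max 0 t) (at t)"
    using less by (auto intro!: derivative_eq_intros)
  then show ?thesis
    by (rule has_field_derivative_transform_within_open[where S="{..<0}"]) (use less in auto)
next
  case equal
  have "((\<lambda>s. ((max 0 s)\<^sup>2 - (max 0 0)\<^sup>2) / s) \<longlongrightarrow> 0) (at (0::real))"
  proof (rule Lim_null_comparison)
    show "\<forall>\<^sub>F s in at 0. norm (((max 0 s)\<^sup>2 - (max 0 0)\<^sup>2) / s) \<le> \<bar>s\<bar>"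
      by (auto simp: power2_eq_square abs_mult max_def)
    show "((\<lambda>s. \<bar>s\<bar>) \<longlongrightarrow> 0) (at (0::real))"
      by (intro tendsto_eq_intros) auto
  qed
  then show ?thesis using equal by (simp add: DERIV_def)
next
  case greater
  have "((\<lambda>s. s\<^sup>2) has_real_derivative 2 * max 0 t) (at t)"
    using greater by (auto intro!: derivative_eq_intros)
  then show ?thesis
    by (rule has_field_derivative_transform_within_open[where S="{0<..}"]) (use greater in auto)
qed

lemma cos_ge_half: "\<bar>t::real\<bar> \<le> 1 \<Longrightarrow> cos t \<ge> 1/2"
proof -
  assume t: "\<bar>t\<bar> \<le> 1"
  have "cos t = 1 - 2 * (sin (t/2))\<^sup>2" using cos_double_sin[of "t/2"] by (simp del: cos_double_sin)
  moreover have "\<bar>sin (t/2)\<bar> \<le> 1/2" using abs_sin_x_le_abs_x[of "t/2"] t by simp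
  then have "\<bar>sin (t/2)\<bar>\<^sup>2 \<le> (1/2)\<^sup>2" by (intro power_mono) auto
  then have "(sin (t/2))\<^sup>2 \<le> 1/4" by (simp add: power2_abs power2_eq_square[of "1/2::real"])
  ultimately show ?thesis by simp
qed

definition slab_field_potential :: "'a::euclidean_space \<Rightarrow> 'a \<Rightarrow> real \<Rightarrow> real \<Rightarrow> 'a \<Rightarrow> real" where
  "slab_field_potential c e h \<rho>2 x = (max 0 (1 - (x - c) \<bullet> (x - c) / \<rho>2))\<^sup>2 * sin (((x - c) \<bullet> e) / h)"

definition slab_field_gradient :: "'a::euclidean_space \<Rightarrow> 'a \<Rightarrow> real \<Rightarrow> real \<Rightarrow> 'a \<Rightarrow> 'a" where
  "slab_field_gradient c e h \<rho>2 x =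
     (let N = 1 - (x - c) \<bullet> (x - c) / \<rho>2; s = ((x - c) \<bullet> e) / h in
       ((max 0 N)\<^sup>2 * cos s / h) *\<^sub>R e + (2 * max 0 N * sin s * (-2 / \<rho>2)) *\<^sub>R (x - c))"

lemma has_derivative_slab_field_potential:
  assumes "\<rho>2 \<noteq> 0" "h \<noteq> 0"
  shows "(slab_field_potential c e h \<rho>2 has_derivative (\<lambda>v. v \<bullet> slab_field_gradient c e h \<rho>2 x)) (at x)"
proof -
  define N where "N x = 1 - (x - c) \<bullet> (x - c) / \<rho>2" for x
  have dN: "(N has_derivative (\<lambda>v. - (2 * ((x - c) \<bullet> v)) / \<rho>2)) (at x)"
    unfolding N_def using assms by (auto intro!: derivative_eq_intros simp: inner_commute field_simps)
  have dq: "((\<lambda>x. (max 0 (N x))\<^sup>2) has_derivative (\<lambda>v. - (2 * ((x - c) \<bullet> v)) / \<rho>2 * (2 * max 0 (N x)))) (at x)"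
    by (rule DERIV_compose_FDERIV[OF has_real_derivative_max_0_power2 dN])
  have ds: "((\<lambda>x. sin (((x - c) \<bullet> e) / h)) has_derivative (\<lambda>v. (v \<bullet> e) / h * cos (((x - c) \<bullet> e) / h))) (at x)"
    using assms by (auto intro!: derivative_eq_intros)
  have "(\<lambda>v. (max 0 (N x))\<^sup>2 * ((v \<bullet> e) / h * cos (((x - c) \<bullet> e) / h)) +
      - (2 * ((x - c) \<bullet> v)) / \<rho>2 * (2 * max 0 (N x)) * sin (((x - c) \<bullet> e) / h)) =
      (\<lambda>v. v \<bullet> slab_field_gradient c e h \<rho>2 x)"
    using assms by (intro ext) (simp add: slab_field_gradient_def N_def Let_def inner_add_right
        inner_diff_right inner_commute field_simps)
  with has_derivative_mult[OF dq ds] show ?thesis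
    unfolding slab_field_potential_def[abs_def] N_def by simp
qed

lemma slab_divergence_lower:
  fixes N t s \<delta> \<rho>2 h :: real
  assumes "3/4 \<le> N" "N \<le> 1" "\<bar>t\<bar> \<le> 1" "\<bar>s\<bar> \<le> \<delta>" "128 * (\<delta> * h) \<le> \<rho>2" "0 < h" "0 < \<rho>2"
  shows "1 / (4 * h) \<le> N\<^sup>2 * cos t / h + 2 * N * sin t * (-2 / \<rho>2) * s"
proof -
  have "(3/4)\<^sup>2 \<le> N\<^sup>2" by (rule power_mono) (use assms in auto)
  then have "9/16 \<le> N\<^sup>2" by (simp add: power2_eq_square)
  then have "9/16 * (1/2) \<le> N\<^sup>2 * cos t"
    using cos_ge_half[OF assms(3)] by (intro mult_mono) auto
  then have main: "9 / (32 * h) \<le> N\<^sup>2 * cos t / h" using assms(6) by (simp add: divide_simps)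
  have "\<bar>2 * N * sin t * (-2 / \<rho>2) * s\<bar> = 4 * N * \<bar>sin t\<bar> * \<bar>s\<bar> / \<rho>2"
    using assms by (simp add: abs_mult abs_div)
  also have "\<dots> \<le> 4 * 1 * 1 * \<delta> / \<rho>2"
    using assms by (intro divide_right_mono mult_mono) auto
  also have "\<dots> \<le> 1 / (32 * h)" using assms by (simp add: divide_simps)
  finally have "\<bar>2 * N * sin t * (-2 / \<rho>2) * s\<bar> \<le> 1 / (32 * h)" .
  moreover have "9 / (32 * h) - 1 / (32 * h) = 1 / (4 * h)" using assms(6) by (simp add: divide_simps)
  ultimately show ?thesis using main by linarith
qed

lemma C1c_field_scaleR_gradient:
  fixes \<psi> :: "'a::euclidean_space \<Rightarrow> real"
  assumes d\<psi>: "\<And>x. (\<psi> has_derivative (\<lambda>v. v \<bullet> G x)) (at x)" and G: "continuous_on UNIV G"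
    and S: "compact S" "\<And>x. x \<notin> S \<Longrightarrow> \<psi> x = 0"
  shows "C1c_field UNIV (\<lambda>x. \<psi> x *\<^sub>R e) (\<lambda>x. blinfun_scaleR_left e o\<^sub>L blinfun_inner_left (G x))"
    and "divergence (\<lambda>x. blinfun_scaleR_left e o\<^sub>L blinfun_inner_left (G x)) x = G x \<bullet> e"
proof -
  have D: "blinfun_apply (blinfun_scaleR_left e o\<^sub>L blinfun_inner_left (G x)) = (\<lambda>v. (v \<bullet> G x) *\<^sub>R e)"
    for x by (rule ext) simp
  have "continuous_on UNIV (\<lambda>x. blinfun_scaleR_left e o\<^sub>L blinfun_inner_left (G x))"
    by (intro bounded_bilinear.continuous_on[OF bounded_bilinear_blinfun_compose continuous_on_const]
        bounded_linear.continuous_on[OF bounded_linear_blinfun_inner_left G])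
  then show "C1c_field UNIV (\<lambda>x. \<psi> x *\<^sub>R e) (\<lambda>x. blinfun_scaleR_left e o\<^sub>L blinfun_inner_left (G x))"
    unfolding C1c_field_def D using S
    by (intro conjI allI exI[of _ S] has_derivative_scaleR_left[OF d\<psi>]) auto
  show "divergence (\<lambda>x. blinfun_scaleR_left e o\<^sub>L blinfun_inner_left (G x)) x = G x \<bullet> e"
    unfolding divergence_def D by (subst euclidean_inner[of "G x" e]) (simp add: inner_commute)
qed

text \<open>\<open>\<phi> = \<psi> e\<close> with \<open>\<psi>\<close> a cut-off of \<open>sin (((x - c) \<bullet> e) / h)\<close>: on the slab the cosine is at least
  \<open>1/2\<close>, and for a cut-off radius much larger than \<open>\<delta>\<close> its gradient is too small to spoil this.\<close>
lemma slab_test_field: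
  fixes c e :: "'a::euclidean_space"
  assumes e: "norm e = 1" and h: "h > 0" and \<delta>: "\<delta> > 0"
  shows "\<exists>\<phi> D\<phi>. C1c_field UNIV \<phi> D\<phi> \<and> (\<forall>x. norm (\<phi> x) \<le> 1) \<and>
           (\<forall>x. norm (x - c) \<le> \<delta> \<longrightarrow> \<bar>(x - c) \<bullet> e\<bar> \<le> h \<longrightarrow> 1 / (4 * h) \<le> divergence D\<phi> x)"
proof -
  define \<rho>2 where "\<rho>2 = 4 * \<delta>\<^sup>2 + 128 * (\<delta> * h) + 1"
  have "0 < \<delta> * h" using \<delta> h by simp
  then have \<rho>2: "\<rho>2 > 0" "\<rho>2 \<ge> 4 * \<delta>\<^sup>2" "\<rho>2 \<ge> 128 * (\<delta> * h)"
    unfolding \<rho>2_def using zero_le_power2[of \<delta>] by linarith+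
  define N where "N x = 1 - (x - c) \<bullet> (x - c) / \<rho>2" for x
  define G where "G = slab_field_gradient c e h \<rho>2"
  define \<phi> where "\<phi> x = slab_field_potential c e h \<rho>2 x *\<^sub>R e" for x
  define D\<phi> where "D\<phi> x = blinfun_scaleR_left e o\<^sub>L blinfun_inner_left (G x)" for x
  have zero: "slab_field_potential c e h \<rho>2 x = 0" if "x \<notin> cball c (sqrt \<rho>2)" for x
  proof -
    have "sqrt \<rho>2 < norm (x - c)" using that by (simp add: dist_norm norm_minus_commute)
    then have "(sqrt \<rho>2)\<^sup>2 < (norm (x - c))\<^sup>2" using \<rho>2 by (intro power_strict_mono) auto
    then have "N x < 0" using \<rho>2 by (simp add: N_def power2_norm_eq_inner)
    then show ?thesis by (simp add: slab_field_potential_def N_def)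
  qed
  have contG: "continuous_on UNIV G"
    unfolding G_def slab_field_gradient_def[abs_def] Let_def
    by (intro continuous_intros) (use \<rho>2 h in auto)
  have "(slab_field_potential c e h \<rho>2 has_derivative (\<lambda>v. v \<bullet> G x)) (at x)" for x
    unfolding G_def by (rule has_derivative_slab_field_potential) (use \<rho>2 h in auto)
  note field = C1c_field_scaleR_gradient[where e=e, OF this contG compact_cball zero]
  have C1: "C1c_field UNIV \<phi> D\<phi>" unfolding \<phi>_def[abs_def] D\<phi>_def[abs_def] by (rule field(1))
  have div: "divergence D\<phi> x = G x \<bullet> e" for x unfolding D\<phi>_def[abs_def] by (rule field(2))
  have "norm (\<phi> x) \<le> 1" for x
  proof -
    have "max 0 (N x) \<le> 1" using \<rho>2 by (simp add: N_def)
    then have "(max 0 (N x))\<^sup>2 \<le> 1" by (simp add: power_le_one)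
    then show ?thesis
      using e abs_sin_le_one[of "((x - c) \<bullet> e) / h"]
      by (simp add: \<phi>_def slab_field_potential_def N_def abs_mult mult_le_one)
  qed
  moreover have "1 / (4 * h) \<le> divergence D\<phi> x"
    if x: "norm (x - c) \<le> \<delta>" "\<bar>(x - c) \<bullet> e\<bar> \<le> h" for x
  proof -
    have "(x - c) \<bullet> (x - c) \<le> \<delta>\<^sup>2"
      using x(1) by (simp add: power2_norm_eq_inner[symmetric] power_mono)
    then have N: "3/4 \<le> N x" "N x \<le> 1" using \<rho>2 by (auto simp: N_def divide_le_eq)
    have "divergence D\<phi> x = G x \<bullet> e" by (rule div)
    also have "\<dots> = (N x)\<^sup>2 * cos (((x - c) \<bullet> e) / h) / h +
        2 * N x * sin (((x - c) \<bullet> e) / h) * (-2 / \<rho>2) * ((x - c) \<bullet> e)"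
    proof -
      have "G x = ((max 0 (N x))\<^sup>2 * cos (((x - c) \<bullet> e) / h) / h) *\<^sub>R e +
          (2 * max 0 (N x) * sin (((x - c) \<bullet> e) / h) * (-2 / \<rho>2)) *\<^sub>R (x - c)"
        by (simp add: G_def slab_field_gradient_def N_def Let_def)
      moreover have "max 0 (N x) = N x" using N by simp
      moreover have "e \<bullet> e = 1" using e by (simp add: dot_square_norm)
      ultimately show ?thesis by (simp add: inner_add_left inner_diff_left)
    qed
    finally show ?thesis
      using slab_divergence_lower[OF N _ _ \<rho>2(3) h \<rho>2(1), of "((x - c) \<bullet> e) / h" "(x - c) \<bullet> e"]
        x(2) h Cauchy_Schwarz_ineq2[of "x - c" e] e x(1)
      by (simp add: abs_div divide_le_eq)
  qed
  ultimately show ?thesis using C1 by blast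
qed

lemma perimeter_ge_measure_div_slab_width:
  fixes \<Omega> :: "'a::euclidean_space set"
  assumes bdd: "bounded \<Omega>" and \<Omega>: "\<Omega> \<in> sets lebesgue" and e: "norm e = 1" and h: "h > 0"
    and slab: "\<forall>x\<in>\<Omega>. \<bar>(x - c) \<bullet> e\<bar> \<le> h"
  shows "ereal (measure lebesgue \<Omega> / (4 * h)) \<le> perimeter \<Omega>"
proof -
  obtain \<delta>0 where "\<forall>x\<in>\<Omega>. dist c x \<le> \<delta>0"
    using bdd unfolding bounded_any_center[of _ c] by blast
  then have \<delta>: "max 1 \<delta>0 > 0" "\<And>x. x \<in> \<Omega> \<Longrightarrow> norm (x - c) \<le> max 1 \<delta>0"
    by (auto simp: dist_norm norm_minus_commute intro: le_max_iff_disj[THEN iffD2])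
  obtain \<phi> D\<phi> where C1: "C1c_field UNIV \<phi> D\<phi>" and bound: "\<And>x. norm (\<phi> x) \<le> 1"
    and div: "\<And>x. x \<in> \<Omega> \<Longrightarrow> 1 / (4 * h) \<le> divergence D\<phi> x"
    using slab_test_field[OF e h \<delta>(1), of c] slab \<delta>(2) by blast
  have "emeasure lebesgue \<Omega> \<noteq> \<infinity>"
    using bounded_set_imp_lmeasurable[OF bdd \<Omega>] unfolding fmeasurable_def
    by (auto simp del: emeasure_completion)
  then have "measure lebesgue \<Omega> / (4 * h) = set_lebesgue_integral lebesgue \<Omega> (\<lambda>_. 1 / (4 * h))"
    using set_integral_const[OF \<Omega>, of "1 / (4 * h)"] by (simp; metis)
  also have "\<dots> \<le> set_lebesgue_integral lebesgue \<Omega> (divergence D\<phi>)"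
    using C1 unfolding C1c_field_def
    by (intro set_integral_mono set_integrable_continuous_bounded[OF _ bdd \<Omega>] div
        continuous_on_divergence) auto
  finally have "ereal (measure lebesgue \<Omega> / (4 * h)) \<le>
      ereal (set_lebesgue_integral lebesgue \<Omega> (divergence D\<phi>))" by simp
  also have "\<dots> \<le> perimeter \<Omega>" by (rule perimeter_ge_integral_divergence[OF C1 bound])
  finally show ?thesis .
qed

section \<open>The perimeter of a ball\<close>

lemma power_Suc_diff_le:
  fixes x y :: real
  assumes "0 \<le> y" "y \<le> x"
  shows "x ^ Suc n - y ^ Suc n \<le> real (Suc n) * (x - y) * x ^ n"
proof (induction n)
  case 0
  then show ?case by simp
next
  case (Suc n)
  have x: "0 \<le> x" using assms by linarith
  have "x ^ Suc (Suc n) - y ^ Suc (Suc n) = x * (x ^ Suc n - y ^ Suc n) + (x - y) * y ^ Suc n"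
    by (simp add: algebra_simps)
  also have "\<dots> \<le> x * (real (Suc n) * (x - y) * x ^ n) + (x - y) * x ^ Suc n"
    using assms by (intro add_mono mult_left_mono[OF Suc x] mult_left_mono power_mono) auto
  also have "\<dots> = real (Suc (Suc n)) * (x - y) * x ^ Suc n"
    by (simp add: algebra_simps)
  finally show ?case .
qed

lemma measure_ball_shell_le:
  fixes R t :: real
  assumes t: "0 < t" "t \<le> 1" "t < R"
  shows "measure lborel (ball (0::'a::euclidean_space) (R + t) - ball 0 (R - t))
           \<le> unit_ball_vol (DIM('a)) * (real DIM('a) * (2 * t) * (R + 1) ^ (DIM('a) - 1))"
proof -
  define d where "d = DIM('a)"
  obtain m where m: "d = Suc m" using DIM_positive[where 'a='a] not0_implies_Suc unfolding d_def by blast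
  have "measure lborel (ball (0::'a) (R + t) - ball 0 (R - t)) =
      measure lborel (ball (0::'a) (R + t)) - measure lborel (ball (0::'a) (R - t))"
    by (rule measure_Diff) (use t emeasure_bounded_finite[of "ball (0::'a) (R + t)"] in \<open>auto simp: less_top\<close>)
  also have "\<dots> = unit_ball_vol d * ((R + t) ^ d - (R - t) ^ d)"
    using content_ball[of "R + t" "0::'a"] content_ball[of "R - t" "0::'a"] t
    by (simp add: d_def algebra_simps)
  also have "\<dots> \<le> unit_ball_vol d * (real d * (2 * t) * (R + 1) ^ (d - 1))"
  proof (rule mult_left_mono)
    have "(R + t) ^ d - (R - t) ^ d \<le> real d * ((R + t) - (R - t)) * (R + t) ^ (d - 1)"
      unfolding m using power_Suc_diff_le[of "R - t" "R + t" m] t by simp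
    also have "\<dots> = real d * (2 * t) * (R + t) ^ (d - 1)" by simp
    also have "\<dots> \<le> real d * (2 * t) * (R + 1) ^ (d - 1)"
      by (intro mult_left_mono power_mono) (use t in auto)
    finally show "(R + t) ^ d - (R - t) ^ d \<le> real d * (2 * t) * (R + 1) ^ (d - 1)" .
  qed simp
  finally show ?thesis by (simp add: d_def)
qed

lemma lborel_integral_translate:
  fixes f :: "'a::euclidean_space \<Rightarrow> real"
  assumes "f \<in> borel_measurable borel"
  shows "integral\<^sup>L lborel (\<lambda>x. f (a + x)) = integral\<^sup>L lborel f"
  using integral_distr[of "(+) a" lborel borel f] assms by (simp add: lborel_distr_plus)

lemma integrable_indicator_times_bounded:
  fixes g :: "'a::euclidean_space \<Rightarrow> real"
  assumes "bounded S" "S \<in> sets borel" "g \<in> borel_measurable borel" "\<And>x. \<bar>g x\<bar> \<le> 1"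
  shows "integrable lborel (\<lambda>x. indicator S x * g x)"
proof (rule integrableI_bounded_set[where A=S and B=1])
  show "emeasure lborel S < \<infinity>" using assms(1) by (rule emeasure_bounded_finite)
  show "AE x in lborel. x \<in> S \<longrightarrow> norm (indicator S x * g x) \<le> 1"
    using assms(4) by (auto simp: indicator_def)
qed (use assms in auto)

text \<open>Translating the ball by \<open>t b\<close> moves it only within the shell \<open>R - t < \<bar>x\<bar> < R + t\<close>.\<close>
lemma integral_ball_difference_quotient_le:
  fixes f :: "'a::euclidean_space \<Rightarrow> real"
  assumes f: "f \<in> borel_measurable borel" "\<And>x. \<bar>f x\<bar> \<le> 1"
    and b: "norm b = 1" and t: "0 < t" "t \<le> 1" "t < R"
  shows "integral\<^sup>L lborel (\<lambda>x. indicator (ball 0 R) x * ((f (x + t *\<^sub>R b) - f x) / t))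
           \<le> 2 * real DIM('a) * unit_ball_vol (DIM('a)) * (R + 1) ^ (DIM('a) - 1)"
proof -
  define B where "B = ball (0::'a) R"
  define A where "A = ball (0::'a) (R + t) - ball 0 (R - t)"
  define H where "H y = indicator B (y - t *\<^sub>R b) * f y" for y
  define I where "I x = indicator B x * f x" for x
  have [measurable]: "B \<in> sets borel" "A \<in> sets borel" "f \<in> borel_measurable borel"
    using f by (auto simp: A_def B_def)
  have iI: "integrable lborel I"
    unfolding I_def B_def by (rule integrable_indicator_times_bounded) (use f in auto)
  have H: "H = (\<lambda>y. indicator (ball (t *\<^sub>R b) R) y * f y)"
    by (auto simp: H_def B_def fun_eq_iff indicator_def dist_norm norm_minus_commute)
  have iH: "integrable lborel H"
    unfolding H by (rule integrable_indicator_times_bounded) (use f in auto)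
  have [measurable]: "H \<in> borel_measurable borel"
    unfolding H using f(1) by (intro borel_measurable_times borel_measurable_indicator) simp_all
  have "bounded A" unfolding A_def by (rule bounded_subset[OF bounded_ball]) auto
  then have iA: "integrable lborel (indicator A :: 'a \<Rightarrow> real)"
    using emeasure_bounded_finite by (intro integrable_real_indicator) auto
  define J where "J x = indicator B x * f (x + t *\<^sub>R b)" for x
  have "J = (\<lambda>x. H (t *\<^sub>R b + x))" by (simp add: J_def H_def fun_eq_iff add.commute)
  then have "integral\<^sup>L lborel J = integral\<^sup>L lborel H"
    using lborel_integral_translate[of H "t *\<^sub>R b"] by simp
  moreover have iJ: "integrable lborel J"
    unfolding J_def B_def using f by (intro integrable_indicator_times_bounded) auto
  moreover have "(\<lambda>x. indicator B x * ((f (x + t *\<^sub>R b) - f x) / t)) = (\<lambda>x. (J x - I x) / t)"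
    by (simp add: fun_eq_iff J_def I_def diff_divide_distrib right_diff_distrib)
  ultimately have "integral\<^sup>L lborel (\<lambda>x. indicator B x * ((f (x + t *\<^sub>R b) - f x) / t)) =
      integral\<^sup>L lborel (\<lambda>x. H x - I x) / t"
    using iH iI by simp
  also have "\<dots> \<le> measure lborel A / t"
  proof (rule divide_right_mono)
    have "H x - I x \<le> indicator A x" for x
      using norm_triangle_sub[of x "t *\<^sub>R b"] norm_triangle_ineq4[of x "t *\<^sub>R b"] f(2)[of x] b t
      by (auto simp: H_def I_def A_def B_def indicator_def)
    then show "integral\<^sup>L lborel (\<lambda>x. H x - I x) \<le> measure lborel A"
      using integral_mono[OF Bochner_Integration.integrable_diff[OF iH iI] iA] by simp
  qed (use t in simp)
  also have "\<dots> \<le> unit_ball_vol (DIM('a)) * (real DIM('a) * (2 * t) * (R + 1) ^ (DIM('a) - 1)) / t"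
    unfolding A_def by (rule divide_right_mono[OF measure_ball_shell_le[OF t]]) (use t in simp)
  also have "\<dots> = 2 * real DIM('a) * unit_ball_vol (DIM('a)) * (R + 1) ^ (DIM('a) - 1)"
    using t by (simp add: field_simps)
  finally show ?thesis by (simp add: B_def)
qed

lemma tendsto_inner_difference_quotient:
  fixes \<phi> :: "'a::euclidean_space \<Rightarrow> 'a"
  assumes "(\<phi> has_derivative blinfun_apply D) (at x)"
  shows "(\<lambda>n. (\<phi> (x + inverse (real (Suc n)) *\<^sub>R b) \<bullet> b - \<phi> x \<bullet> b) / inverse (real (Suc n)))
           \<longlonglongrightarrow> blinfun_apply D b \<bullet> b"
proof -
  define F where "F s = \<phi> (x + s *\<^sub>R b) \<bullet> b" for s :: real
  have "((\<lambda>s::real. x + s *\<^sub>R b) has_derivative (\<lambda>s. s *\<^sub>R b)) (at 0)"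
    by (auto intro!: derivative_eq_intros)
  moreover have "(\<phi> has_derivative blinfun_apply D) (at (x + 0 *\<^sub>R b))" using assms by simp
  ultimately have "((\<lambda>s. \<phi> (x + s *\<^sub>R b)) has_derivative (\<lambda>s. blinfun_apply D (s *\<^sub>R b))) (at 0)"
    by (rule has_derivative_compose)
  then have "(F has_derivative (\<lambda>s. blinfun_apply D (s *\<^sub>R b) \<bullet> b)) (at 0)"
    unfolding F_def by (intro has_derivative_inner_left)
  moreover have "(\<lambda>s. blinfun_apply D (s *\<^sub>R b) \<bullet> b) = (*) (blinfun_apply D b \<bullet> b)"
    by (rule ext) (simp add: blinfun.scaleR_right)
  ultimately have "(F has_field_derivative (blinfun_apply D b \<bullet> b)) (at 0)"
    by (simp add: has_field_derivative_def)
  then have "((\<lambda>s. (F (0 + s) - F 0) / s) \<longlongrightarrow> blinfun_apply D b \<bullet> b) (at 0)"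
    by (simp add: DERIV_def)
  moreover have "filterlim (\<lambda>n. inverse (real (Suc n))) (at 0) sequentially"
    unfolding filterlim_at using LIMSEQ_inverse_real_of_nat by auto
  ultimately have "(\<lambda>n. (F (0 + inverse (real (Suc n))) - F 0) / inverse (real (Suc n)))
      \<longlonglongrightarrow> blinfun_apply D b \<bullet> b"
    by (rule filterlim_compose)
  then show ?thesis by (simp add: F_def)
qed

lemma abs_inner_difference_quotient_le:
  fixes \<phi> :: "'a::euclidean_space \<Rightarrow> 'a"
  assumes d\<phi>: "\<And>y. (\<phi> has_derivative blinfun_apply (D\<phi> y)) (at y)"
    and M: "\<And>y. y \<in> S \<Longrightarrow> norm (D\<phi> y) \<le> M" and S: "convex S" "x \<in> S" "x + t *\<^sub>R b \<in> S"
    and b: "norm b = 1" and t: "0 < t"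
  shows "\<bar>(\<phi> (x + t *\<^sub>R b) \<bullet> b - \<phi> x \<bullet> b) / t\<bar> \<le> M"
proof -
  have "norm (\<phi> (x + t *\<^sub>R b) - \<phi> x) \<le> M * norm (x + t *\<^sub>R b - x)"
    by (rule differentiable_bound[OF S(1) has_derivative_at_withinI[OF d\<phi>]])
      (use M S in \<open>auto simp: norm_blinfun.rep_eq\<close>)
  then have "norm (\<phi> (x + t *\<^sub>R b) - \<phi> x) \<le> M * t" using t b by simp
  moreover have "\<bar>\<phi> (x + t *\<^sub>R b) \<bullet> b - \<phi> x \<bullet> b\<bar> \<le> norm (\<phi> (x + t *\<^sub>R b) - \<phi> x)"
    using Cauchy_Schwarz_ineq2[of "\<phi> (x + t *\<^sub>R b) - \<phi> x" b] b by (simp add: inner_diff_left)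
  ultimately show ?thesis using t by (simp add: abs_div pos_divide_le_eq)
qed

lemma tendsto_integral_ball_difference_quotient:
  fixes \<phi> :: "'a::euclidean_space \<Rightarrow> 'a"
  assumes C1: "C1c_field UNIV \<phi> D\<phi>" and b: "norm b = 1"
  shows "(\<lambda>n. integral\<^sup>L lborel (\<lambda>x. indicator (ball 0 R) x *
             ((\<phi> (x + inverse (real (Suc n)) *\<^sub>R b) \<bullet> b - \<phi> x \<bullet> b) / inverse (real (Suc n)))))
           \<longlonglongrightarrow> integral\<^sup>L lborel (\<lambda>x. indicator (ball 0 R) x * (blinfun_apply (D\<phi> x) b \<bullet> b))"
proof -
  define B where "B = ball (0::'a) R"
  define C where "C = cball (0::'a) (R + 1)"
  define t where "t n = inverse (real (Suc n))" for n
  define F where "F n x = indicator B x * ((\<phi> (x + t n *\<^sub>R b) \<bullet> b - \<phi> x \<bullet> b) / t n)" for n x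
  have d\<phi>: "\<And>x. (\<phi> has_derivative blinfun_apply (D\<phi> x)) (at x)" and contD: "continuous_on UNIV D\<phi>"
    using C1 by (auto simp: C1c_field_def)
  have "continuous_on UNIV \<phi>"
    by (intro continuous_at_imp_continuous_on ballI has_derivative_continuous[OF d\<phi>])
  then have [measurable]: "(\<lambda>x. \<phi> x \<bullet> b) \<in> borel_measurable borel"
    by (intro borel_measurable_continuous_onI continuous_intros)
  have "continuous_on UNIV (\<lambda>x. blinfun_apply (D\<phi> x) b \<bullet> b)"
    by (intro continuous_intros bounded_bilinear.continuous_on[OF bounded_bilinear_blinfun_apply])
      (use contD in auto)
  then have [measurable]: "(\<lambda>x. blinfun_apply (D\<phi> x) b \<bullet> b) \<in> borel_measurable borel"
    by (rule borel_measurable_continuous_onI)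
  have [measurable]: "B \<in> sets borel" by (simp add: B_def)
  have t: "0 < t n" "t n \<le> 1" for n by (auto simp: t_def inverse_le_1_iff)
  have "compact (D\<phi> ` C)" unfolding C_def
    by (rule compact_continuous_image[OF continuous_on_subset[OF contD]]) auto
  then have "bounded (D\<phi> ` C)" by (rule compact_imp_bounded)
  then obtain M where "\<forall>z\<in>D\<phi> ` C. norm z \<le> M"
    unfolding bounded_iff by blast
  then have M: "\<And>y. y \<in> C \<Longrightarrow> norm (D\<phi> y) \<le> M" by blast
  have "(\<lambda>n. integral\<^sup>L lborel (F n)) \<longlonglongrightarrow> integral\<^sup>L lborel (\<lambda>x. indicator B x * (blinfun_apply (D\<phi> x) b \<bullet> b))"
  proof (rule integral_dominated_convergence[where w="\<lambda>x. indicator B x * M"])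
    show "integrable lborel (\<lambda>x. indicator B x * M)"
      using emeasure_bounded_finite[of B] by (intro integrable_mult_left integrable_real_indicator)
        (auto simp: B_def)
    show "AE x in lborel. (\<lambda>n. F n x) \<longlonglongrightarrow> indicator B x * (blinfun_apply (D\<phi> x) b \<bullet> b)"
      using tendsto_inner_difference_quotient[OF d\<phi>]
      by (intro AE_I2) (auto simp: F_def t_def indicator_def)
    show "AE x in lborel. norm (F n x) \<le> indicator B x * M" for n
    proof (intro AE_I2)
      fix x :: 'a
      show "norm (F n x) \<le> indicator B x * M"
      proof (cases "x \<in> B")
        case True
        then have "x \<in> C" "x + t n *\<^sub>R b \<in> C"
          using t[of n] norm_triangle_ineq[of x "t n *\<^sub>R b"] b by (simp_all add: B_def C_def)
        with abs_inner_difference_quotient_le[OF d\<phi> M _ this b t(1)] True show ?thesis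
          by (simp add: F_def C_def)
      qed (simp add: F_def)
    qed
    show "F n \<in> borel_measurable lborel" for n unfolding F_def by measurable
  qed measurable
  then show ?thesis unfolding F_def B_def t_def .
qed

lemma set_integral_ball_partial_le:
  fixes \<phi> :: "'a::euclidean_space \<Rightarrow> 'a"
  assumes C1: "C1c_field UNIV \<phi> D\<phi>" and \<phi>: "\<And>x. norm (\<phi> x) \<le> 1" and b: "b \<in> Basis" and R: "R > 0"
  shows "set_lebesgue_integral lebesgue (ball 0 R) (\<lambda>x. blinfun_apply (D\<phi> x) b \<bullet> b)
           \<le> 2 * real DIM('a) * unit_ball_vol (DIM('a)) * (R + 1) ^ (DIM('a) - 1)"
proof -
  define t where "t n = inverse (real (Suc n))" for n
  define f where "f x = \<phi> x \<bullet> b" for x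
  define g where "g x = blinfun_apply (D\<phi> x) b \<bullet> b" for x
  have nb: "norm b = 1" using b by simp
  have d\<phi>: "\<And>x. (\<phi> has_derivative blinfun_apply (D\<phi> x)) (at x)" and contD: "continuous_on UNIV D\<phi>"
    using C1 by (auto simp: C1c_field_def)
  have "continuous_on UNIV \<phi>"
    by (intro continuous_at_imp_continuous_on ballI has_derivative_continuous[OF d\<phi>])
  then have fm: "f \<in> borel_measurable borel"
    unfolding f_def by (intro borel_measurable_continuous_onI continuous_intros)
  have "continuous_on UNIV g" unfolding g_def
    by (intro continuous_intros bounded_bilinear.continuous_on[OF bounded_bilinear_blinfun_apply])
      (use contD in auto)
  then have [measurable]: "g \<in> borel_measurable borel" by (rule borel_measurable_continuous_onI)
  have [measurable]: "ball (0::'a) R \<in> sets borel" by simp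
  have f_le: "\<bar>f x\<bar> \<le> 1" for x
    using Cauchy_Schwarz_ineq2[of "\<phi> x" b] \<phi>[of x] nb unfolding f_def by simp
  have t: "0 < t n" "t n \<le> 1" for n by (auto simp: t_def inverse_le_1_iff)
  have bound: "integral\<^sup>L lborel (\<lambda>x. indicator (ball 0 R) x * ((f (x + t n *\<^sub>R b) - f x) / t n))
      \<le> 2 * real DIM('a) * unit_ball_vol (DIM('a)) * (R + 1) ^ (DIM('a) - 1)" if "t n < R" for n
    using integral_ball_difference_quotient_le[of f, OF fm f_le nb t that] by simp
  have lim: "(\<lambda>n. integral\<^sup>L lborel (\<lambda>x. indicator (ball 0 R) x * ((f (x + t n *\<^sub>R b) - f x) / t n)))
      \<longlonglongrightarrow> integral\<^sup>L lborel (\<lambda>x. indicator (ball 0 R) x * g x)"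
    using tendsto_integral_ball_difference_quotient[OF C1 nb, of R] unfolding f_def g_def t_def .
  obtain N0 where "t N0 < R" using reals_Archimedean[OF R] by (auto simp: t_def)
  moreover have "t n \<le> t N0" if "N0 \<le> n" for n
    unfolding t_def by (rule le_imp_inverse_le) (use that in auto)
  ultimately have "\<And>n. N0 \<le> n \<Longrightarrow> t n < R" by (meson le_less_trans)
  then have "integral\<^sup>L lborel (\<lambda>x. indicator (ball 0 R) x * g x)
      \<le> 2 * real DIM('a) * unit_ball_vol (DIM('a)) * (R + 1) ^ (DIM('a) - 1)"
    by (intro LIMSEQ_le_const2[OF lim] exI[of _ N0] allI impI bound)
  moreover have "set_lebesgue_integral lebesgue (ball 0 R) g = integral\<^sup>L lborel (\<lambda>x. indicator (ball 0 R) x * g x)"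
    unfolding set_lebesgue_integral_def by (simp add: integral_completion)
  ultimately have "set_lebesgue_integral lebesgue (ball 0 R) g
      \<le> 2 * real DIM('a) * unit_ball_vol (DIM('a)) * (R + 1) ^ (DIM('a) - 1)" by simp
  then show ?thesis unfolding g_def .
qed

lemma perimeter_ball_le:
  assumes R: "R > 0"
  shows "perimeter (ball (0::'a::euclidean_space) R)
     \<le> ereal (real DIM('a) * (2 * real DIM('a) * unit_ball_vol (DIM('a)) * (R + 1) ^ (DIM('a) - 1)))"
  unfolding perimeter_def
proof (rule SUP_least, clarify)
  fix \<phi> :: "'a \<Rightarrow> 'a" and D\<phi> assume C1: "C1c_field UNIV \<phi> D\<phi>" and \<phi>: "\<forall>x. norm (\<phi> x) \<le> 1"
  define B where "B = ball (0::'a) R"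
  have contD: "continuous_on UNIV D\<phi>" using C1 by (simp add: C1c_field_def)
  have "set_integrable lebesgue B (\<lambda>x. blinfun_apply (D\<phi> x) b \<bullet> b)" for b
    by (rule set_integrable_continuous_bounded)
      (auto simp: B_def intro!: continuous_intros bounded_bilinear.continuous_on[OF bounded_bilinear_blinfun_apply contD])
  then have "set_lebesgue_integral lebesgue B (\<lambda>x. \<Sum>b\<in>Basis. blinfun_apply (D\<phi> x) b \<bullet> b)
      = (\<Sum>b\<in>Basis. set_lebesgue_integral lebesgue B (\<lambda>x. blinfun_apply (D\<phi> x) b \<bullet> b))"
    unfolding set_lebesgue_integral_def set_integrable_def
    by (subst scaleR_sum_right) (rule Bochner_Integration.integral_sum)
  also have "\<dots> \<le> real DIM('a) * (2 * real DIM('a) * unit_ball_vol (DIM('a)) * (R + 1) ^ (DIM('a) - 1))"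
    using sum_bounded_above[of Basis "\<lambda>b. set_lebesgue_integral lebesgue B (\<lambda>x. blinfun_apply (D\<phi> x) b \<bullet> b)"]
      set_integral_ball_partial_le[OF C1 _ _ R] \<phi> by (simp add: B_def)
  finally show "ereal (set_lebesgue_integral lebesgue (ball 0 R) (\<lambda>x. \<Sum>b\<in>Basis. blinfun_apply (D\<phi> x) b \<bullet> b))
      \<le> ereal (real DIM('a) * (2 * real DIM('a) * unit_ball_vol (DIM('a)) * (R + 1) ^ (DIM('a) - 1)))"
    by (simp add: B_def)
qed

section \<open>The diameter bound\<close>

lemma diameter_bound_from_volume_estimates:
  fixes D r M V \<omega> m :: real and d :: nat
  assumes d: "d \<ge> 2" and r: "r > 0" and \<omega>: "\<omega> > 0" and V: "V > 0" and D: "D \<ge> 0"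
    and lower: "V \<le> m" and slab: "m \<le> 4 * (12 ^ d * r) * M"
    and cone: "(D / 2) / (2 * r) * (\<omega> * (r / 2) ^ d) \<le> m"
  shows "D \<le> 16 * 24 ^ d * M / (\<omega> * (V / (4 * 12 ^ d * M)) ^ (d - 2))"
proof -
  have M: "M > 0"
    using lower slab V r by (smt (verit) mult_nonneg_nonpos mult_pos_pos zero_less_power)
  define r0 where "r0 = V / (4 * 12 ^ d * M)"
  have r0: "0 < r0" "r0 \<le> r"
    using V M lower slab by (auto simp: r0_def divide_le_eq algebra_simps)
  obtain k where k: "d = k + 2" using d by (metis le_add_diff_inverse2)
  have "(D / 2) / (2 * r) * (\<omega> * (r / 2) ^ d) = (D * \<omega> * r ^ k / (16 * 24 ^ d)) * (4 * (12 ^ d * r))"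
    using r power_mult_distrib[of "2::real" 12 k]
    by (simp add: k power_add power_divide power_mult_distrib field_simps)
  then have "(D * \<omega> * r ^ k / (16 * 24 ^ d)) * (4 * (12 ^ d * r)) \<le> M * (4 * (12 ^ d * r))"
    using cone slab by (simp add: mult.commute)
  then have "D * \<omega> * r ^ k / (16 * 24 ^ d) \<le> M"
    by (rule mult_right_le_imp_le) (use r in simp)
  then have "D * (\<omega> * r ^ k) \<le> 16 * 24 ^ d * M" by (simp add: field_simps)
  moreover have "D * (\<omega> * r0 ^ k) \<le> D * (\<omega> * r ^ k)"
    using r0 \<omega> D by (intro mult_left_mono power_mono) auto
  ultimately have "D * (\<omega> * r0 ^ k) \<le> 16 * 24 ^ d * M" by linarith
  moreover have "0 < \<omega> * r0 ^ k" using r0 \<omega> by simp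
  ultimately have "D \<le> 16 * 24 ^ d * M / (\<omega> * r0 ^ k)" by (simp add: le_divide_eq)
  moreover have "d - 2 = k" using k by simp
  ultimately show ?thesis by (simp add: r0_def)
qed

text \<open>With an inscribed ball of radius \<open>r\<close> and a slab of width \<open>O(r)\<close>, the perimeter bounds the
  volume by \<open>O(r M)\<close>, hence \<open>r\<close> from below, while the cone over the inscribed ball bounds the
  diameter by \<open>O(M / r\<^sup>d\<^sup>-\<^sup>2)\<close>; this is where \<open>d \<ge> 2\<close> is used.\<close>
lemma convex_diameter_le_perimeter_measure:
  fixes \<Omega> :: "'a::euclidean_space set"
  assumes d: "DIM('a) \<ge> 2" and \<Omega>: "bounded \<Omega>" "open \<Omega>" "convex \<Omega>"
    and per: "perimeter \<Omega> \<le> ereal M" and V: "0 < V" "V \<le> measure lebesgue \<Omega>"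
  shows "diameter \<Omega> \<le> 16 * 24 ^ DIM('a) * M /
           (unit_ball_vol (DIM('a)) * (V / (4 * 12 ^ DIM('a) * M)) ^ (DIM('a) - 2))"
proof -
  define K where "K = closure \<Omega>"
  have K: "compact K" "convex K" "\<Omega> \<subseteq> K"
    using \<Omega> by (auto simp: K_def compact_closure convex_closure closure_subset)
  have "\<Omega> \<noteq> {}" using V by auto
  then have "interior K \<noteq> {}"
    using interior_maximal[OF K(3) \<Omega>(2)] by auto
  then obtain g r e c where r: "r > 0" and e: "norm e = 1" and ball: "cball g r \<subseteq> K"
    and slab: "\<forall>x\<in>K. \<bar>(x - c) \<bullet> e\<bar> \<le> 12 ^ DIM('a) * r"
    using convex_body_inball_slab[OF K(1,2)] by blast
  have "ereal (measure lebesgue \<Omega> / (4 * (12 ^ DIM('a) * r))) \<le> perimeter \<Omega>"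
    using slab K(3) r \<Omega>(2) by (intro perimeter_ge_measure_div_slab_width[OF \<Omega>(1) _ e]) auto
  from this per have "ereal (measure lebesgue \<Omega> / (4 * (12 ^ DIM('a) * r))) \<le> ereal M"
    by (rule order_trans)
  then have "measure lebesgue \<Omega> / (4 * (12 ^ DIM('a) * r)) \<le> M" by simp
  then have upper: "measure lebesgue \<Omega> \<le> 4 * (12 ^ DIM('a) * r) * M"
    using r by (simp add: divide_le_eq mult.commute)
  have mK: "measure lebesgue K = measure lebesgue \<Omega>"
    unfolding K_def by (rule measure_closure[OF \<Omega>(1) negligible_convex_frontier[OF \<Omega>(3)]])
  have "K \<noteq> {}" using \<open>\<Omega> \<noteq> {}\<close> K(3) by auto
  then obtain x y where xy: "x \<in> K" "y \<in> K" "dist x y = diameter \<Omega>"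
    using diameter_compact_attained[OF K(1)] diameter_closure[OF \<Omega>(1)] by (auto simp: K_def)
  have "diameter \<Omega> \<le> dist x g + dist y g"
    using xy dist_triangle[of x y g] by (simp add: dist_commute)
  then have "diameter \<Omega> / 2 \<le> dist x g \<or> diameter \<Omega> / 2 \<le> dist y g" by linarith
  then obtain p where p: "p \<in> K" "diameter \<Omega> / 2 \<le> dist p g"
    using xy(1,2) by blast
  have "(diameter \<Omega> / 2) / (2 * r) * (unit_ball_vol (DIM('a)) * (r / 2) ^ DIM('a))
      \<le> dist p g / (2 * r) * (unit_ball_vol (DIM('a)) * (r / 2) ^ DIM('a))"
    using p r by (intro mult_right_mono divide_right_mono) auto
  also have "\<dots> \<le> measure lebesgue \<Omega>"
    using convex_measure_ge_dist_inball[OF K(2) lmeasurable_compact[OF K(1)] ball p(1) r] mK by simp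
  finally show ?thesis
    using diameter_bound_from_volume_estimates[OF d r _ V(1) diameter_ge_0[OF \<Omega>(1)] V(2) upper]
    by simp
qed

theorem mainTheorem11:
  fixes p q R1 R2 :: real
  assumes "DIM('a::euclidean_space) \<ge> 2"
    and "1 < p" and "1 \<le> q" and "q \<le> p"
    and "0 < R1" and "R1 < R2"
  shows "\<exists>C>0. \<forall>(\<Omega>0::'a set) \<Theta>.
           bounded \<Omega>0 \<and> open \<Omega>0 \<and> convex \<Omega>0 \<and>
           bounded \<Theta> \<and> open \<Theta> \<and> convex \<Theta> \<and> closure \<Theta> \<subseteq> \<Omega>0 \<and>
           perimeter \<Omega>0 = perimeter (ball (0::'a) R2) \<and>
           measure lebesgue (\<Omega>0 - closure \<Theta>) = measure lebesgue (ball (0::'a) R2 - cball 0 R1) \<and>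
           steklov_sigma p q \<Omega>0 \<Theta> \<ge> steklov_sigma p q (ball (0::'a) R2) (ball 0 R1) / 2
           \<longrightarrow> diameter \<Omega>0 \<le> C"
proof -
  define M where "M = real DIM('a) * (2 * real DIM('a) * unit_ball_vol (DIM('a)) * (R2 + 1) ^ (DIM('a) - 1))"
  define V where "V = measure lebesgue (ball (0::'a) R2 - cball 0 R1)"
  define C where "C = 16 * 24 ^ DIM('a) * M / (unit_ball_vol (DIM('a)) * (V / (4 * 12 ^ DIM('a) * M)) ^ (DIM('a) - 2))"
  have M: "perimeter (ball (0::'a) R2) \<le> ereal M"
    unfolding M_def using assms by (intro perimeter_ball_le) simp
  have V: "V > 0" unfolding V_def using assms by (intro measure_annulus_pos)
  show ?thesis
  proof (intro exI[of _ "max 1 C"] conjI allI impI)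
    fix \<Omega>0 \<Theta> :: "'a set"
    assume H: "bounded \<Omega>0 \<and> open \<Omega>0 \<and> convex \<Omega>0 \<and>
           bounded \<Theta> \<and> open \<Theta> \<and> convex \<Theta> \<and> closure \<Theta> \<subseteq> \<Omega>0 \<and>
           perimeter \<Omega>0 = perimeter (ball (0::'a) R2) \<and>
           measure lebesgue (\<Omega>0 - closure \<Theta>) = measure lebesgue (ball (0::'a) R2 - cball 0 R1) \<and>
           steklov_sigma p q \<Omega>0 \<Theta> \<ge> steklov_sigma p q (ball (0::'a) R2) (ball 0 R1) / 2"
    have "measure lebesgue (\<Omega>0 - closure \<Theta>) \<le> measure lebesgue \<Omega>0"
      using H by (intro measure_mono_fmeasurable) (auto intro: bounded_set_imp_lmeasurable)
    with H have "V \<le> measure lebesgue \<Omega>0" by (simp add: V_def)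
    then have "diameter \<Omega>0 \<le> C"
      unfolding C_def using H M V by (intro convex_diameter_le_perimeter_measure[OF assms(1)]) auto
    then show "diameter \<Omega>0 \<le> max 1 C" by simp
  qed simp
qed

end
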